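(* Let $X$ be a compact Hausdorff space and $T\colon X\to X$ a continuous positively expansive map. Let $\hat Z=(\hat r,\hat s\colon\hat Y\to\hat X)$ be a topological graph with $\hat Y,\hat X$ compact Hausdorff, and let $\pi_{\hat Y}\colon\hat Y\to X$, $\pi_{\hat X}\colon\hat X\to X$ be continuous surjections with $T\circ\pi_{\hat Y}=\pi_{\hat X}\circ\hat r$ and $\pi_{\hat Y}=\pi_{\hat X}\circ\hat s$. If $\pi_{\hat Y}$ is locally injective, then the shift $\sigma\colon\hat Z^{-\infty}\to\hat Z^{-\infty}$ is positively expansive.
   Context: A topological graph $(\hat r,\hat s\colon\hat Y\to\hat X)$ consists of continuous maps (range, source). Its left infinite path space is $\hat Z^{-\infty}=\{(\dots,y_{-2},y_{-1})\in\prod_{i<0}\hat Y:\hat s(y_i)=\hat r(y_{i+1})\ \forall i<-1\}$ with the relative product topology, and the shift is $\sigma(\dots,y_{-3},y_{-2},y_{-1})=(\dots,y_{-3},y_{-2})$. A continuous map $S\colon W\to W$ on a compact Hausdorff space is positively expansive if there is a finite open cover $\{U_i\}_{i=1}^m$ of $W$ such that whenever $w,w'\in W$ satisfy: for every $n\ge0$ there is $i_n$ with $S^n(w),S^n(w')\in U_{i_n}$, then $w=w'$ (for metrizable $W$ this is equivalent to the usual metric definition). *)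

theory Defs
  imports "HOL-Analysis.Analysis"
begin

definition positively_expansive :: "'a topology \<Rightarrow> ('a \<Rightarrow> 'a) \<Rightarrow> bool" where
  "positively_expansive W S \<longleftrightarrow>
     continuous_map W W S \<and>
     (\<exists>\<U>. finite \<U> \<and> (\<forall>U\<in>\<U>. openin W U) \<and> \<Union>\<U> = topspace W \<and>
        (\<forall>w\<in>topspace W. \<forall>w'\<in>topspace W.
           (\<forall>n. \<exists>U\<in>\<U>. (S ^^ n) w \<in> U \<and> (S ^^ n) w' \<in> U) \<longrightarrow> w = w'))"

definition locally_injective :: "'a topology \<Rightarrow> ('a \<Rightarrow> 'b) \<Rightarrow> bool" where
  "locally_injective Y f \<longleftrightarrow>
     (\<forall>y\<in>topspace Y. \<exists>U. openin Y U \<and> y \<in> U \<and> inj_on f U)"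

text \<open>A path (..., y_{-2}, y_{-1}) is encoded as p :: nat => 'y with p n = y_{-(n+1)};
  the condition s(y_i) = r(y_{i+1}) for i < -1 becomes s (p (Suc n)) = r (p n).\<close>
definition left_paths :: "'y topology \<Rightarrow> ('y \<Rightarrow> 'x) \<Rightarrow> ('y \<Rightarrow> 'x) \<Rightarrow> (nat \<Rightarrow> 'y) set" where
  "left_paths Y r s = {p \<in> topspace (product_topology (\<lambda>_. Y) UNIV). \<forall>n. s (p (Suc n)) = r (p n)}"

definition left_path_space :: "'y topology \<Rightarrow> ('y \<Rightarrow> 'x) \<Rightarrow> ('y \<Rightarrow> 'x) \<Rightarrow> (nat \<Rightarrow> 'y) topology" where
  "left_path_space Y r s = subtopology (product_topology (\<lambda>_. Y) UNIV) (left_paths Y r s)"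

text \<open>The shift deletes y_{-1}: in the encoding, (shift p) n = p (Suc n).\<close>
definition path_shift :: "(nat \<Rightarrow> 'y) \<Rightarrow> (nat \<Rightarrow> 'y)" where
  "path_shift p = (\<lambda>n. p (Suc n))"

end

theory Submission
  imports Defs
begin

text \<open>A path projects under \<open>\<pi>\<^sub>Y\<close> to a forward \<open>T\<close>-orbit, so two paths that stay close
  at every coordinate project to orbits that stay in common members of an expansive cover of \<open>X\<close>;
  hence they have the same projections everywhere. Covering the compact space \<open>Y\<close> by finitely many
  open sets on which \<open>\<pi>\<^sub>Y\<close> is injective then forces the paths to coincide.\<close>

lemma funpow_path_shift: "(path_shift ^^ n) p = (\<lambda>k. p (k + n))"
  by (induction n arbitrary: p) (auto simp: path_shift_def)

lemma topspace_left_path_space: "topspace (left_path_space Y r s) = left_paths Y r s"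
  unfolding left_path_space_def left_paths_def by auto

lemma left_paths_in_topspace: "p \<in> left_paths Y r s \<Longrightarrow> p n \<in> topspace Y"
  by (auto simp: left_paths_def topspace_product_topology)

lemma continuous_map_path_shift:
  "continuous_map (left_path_space Y r s) (left_path_space Y r s) path_shift"
proof -
  let ?P = "product_topology (\<lambda>_. Y) (UNIV :: nat set)"
  have "continuous_map ?P ?P path_shift"
    unfolding path_shift_def continuous_map_componentwise_UNIV
    using continuous_map_product_projection[of "Suc _" UNIV "\<lambda>_. Y"] by simp
  then have "continuous_map (subtopology ?P (left_paths Y r s)) ?P path_shift"
    by (rule continuous_map_from_subtopology)
  moreover have "path_shift \<in> topspace (subtopology ?P (left_paths Y r s)) \<rightarrow> left_paths Y r s"
    by (auto simp: left_paths_def path_shift_def)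
  ultimately show ?thesis
    unfolding left_path_space_def by (rule continuous_map_into_subtopology)
qed

lemma openin_left_path_space_head:
  assumes "openin Y V"
  shows "openin (left_path_space Y r s) {p \<in> left_paths Y r s. p 0 \<in> V}"
proof -
  let ?P = "product_topology (\<lambda>_. Y) (UNIV :: nat set)"
  have "continuous_map ?P Y (\<lambda>p. p 0)"
    using continuous_map_product_projection[of 0 UNIV "\<lambda>_. Y"] by simp
  then have "openin ?P {p \<in> topspace ?P. p 0 \<in> V}"
    using assms by (rule openin_continuous_map_preimage)
  moreover have "{p \<in> left_paths Y r s. p 0 \<in> V} = left_paths Y r s \<inter> {p \<in> topspace ?P. p 0 \<in> V}"
    by (auto simp: left_paths_def)
  ultimately show ?thesis
    unfolding left_path_space_def by (simp add: openin_subtopology_Int2)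
qed

text \<open>Since the \<open>n\<close>-th shift of a path starts at its \<open>n\<close>-th coordinate, a finite open cover
  of \<open>Y\<close> pulled back along the head coordinate serves as an expansive cover.\<close>

lemma positively_expansive_path_shiftI:
  assumes "finite \<V>" and "\<forall>V\<in>\<V>. openin Y V" and "topspace Y \<subseteq> \<Union>\<V>"
    and "\<And>p q. p \<in> left_paths Y r s \<Longrightarrow> q \<in> left_paths Y r s \<Longrightarrow>
           (\<forall>n. \<exists>V\<in>\<V>. p n \<in> V \<and> q n \<in> V) \<Longrightarrow> p = q"
  shows "positively_expansive (left_path_space Y r s) path_shift"
  unfolding positively_expansive_def
proof (intro conjI continuous_map_path_shift exI)
  define \<W> where "\<W> = (\<lambda>V. {p \<in> left_paths Y r s. p 0 \<in> V}) ` \<V>"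
  show "finite \<W>"
    unfolding \<W>_def using assms(1) by simp
  show "\<forall>W\<in>\<W>. openin (left_path_space Y r s) W"
    unfolding \<W>_def using assms(2) by (simp add: openin_left_path_space_head)
  show "\<Union>\<W> = topspace (left_path_space Y r s)"
  proof
    show "\<Union>\<W> \<subseteq> topspace (left_path_space Y r s)"
      unfolding \<W>_def topspace_left_path_space by auto
    show "topspace (left_path_space Y r s) \<subseteq> \<Union>\<W>"
    proof
      fix p assume "p \<in> topspace (left_path_space Y r s)"
      then have p: "p \<in> left_paths Y r s" by (simp add: topspace_left_path_space)
      then obtain V where "V \<in> \<V>" "p 0 \<in> V"
        using assms(3) left_paths_in_topspace[OF p, of 0] by auto
      then show "p \<in> \<Union>\<W>" unfolding \<W>_def using p by auto
    qed
  qed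
  show "\<forall>p\<in>topspace (left_path_space Y r s). \<forall>q\<in>topspace (left_path_space Y r s).
      (\<forall>n. \<exists>W\<in>\<W>. (path_shift ^^ n) p \<in> W \<and> (path_shift ^^ n) q \<in> W) \<longrightarrow> p = q"
  proof (intro ballI impI)
    fix p q
    assume "p \<in> topspace (left_path_space Y r s)" "q \<in> topspace (left_path_space Y r s)"
      and close: "\<forall>n. \<exists>W\<in>\<W>. (path_shift ^^ n) p \<in> W \<and> (path_shift ^^ n) q \<in> W"
    then have "p \<in> left_paths Y r s" "q \<in> left_paths Y r s"
      by (simp_all add: topspace_left_path_space)
    moreover have "\<forall>n. \<exists>V\<in>\<V>. p n \<in> V \<and> q n \<in> V"
      using close unfolding \<W>_def funpow_path_shift by auto
    ultimately show "p = q" by (rule assms(4))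
  qed
qed

lemma locally_injective_finite_cover:
  assumes "compact_space Y" and "locally_injective Y f"
  obtains \<F> where "finite \<F>" "\<forall>V\<in>\<F>. openin Y V \<and> inj_on f V" "topspace Y \<subseteq> \<Union>\<F>"
proof -
  let ?\<V> = "{V. openin Y V \<and> inj_on f V}"
  have "topspace Y \<subseteq> \<Union>?\<V>"
    using assms(2) unfolding locally_injective_def by blast
  then obtain \<F> where "finite \<F>" "\<F> \<subseteq> ?\<V>" "topspace Y \<subseteq> \<Union>\<F>"
    using compactinD[OF assms(1)[unfolded compact_space_def], of ?\<V>] by auto
  then show thesis using that by blast
qed

lemma common_refinement_preimage:
  assumes "continuous_map Y X f"
    and "finite \<F>" "\<forall>V\<in>\<F>. openin Y V" "topspace Y \<subseteq> \<Union>\<F>"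
    and "finite \<U>" "\<forall>U\<in>\<U>. openin X U" "topspace X \<subseteq> \<Union>\<U>"
  obtains \<V> where "finite \<V>" "\<forall>W\<in>\<V>. openin Y W" "topspace Y \<subseteq> \<Union>\<V>"
    "\<And>y y'. \<exists>W\<in>\<V>. y \<in> W \<and> y' \<in> W \<Longrightarrow>
       (\<exists>V\<in>\<F>. y \<in> V \<and> y' \<in> V) \<and> (\<exists>U\<in>\<U>. f y \<in> U \<and> f y' \<in> U)"
proof
  let ?\<V> = "(\<lambda>(V, U). {y \<in> V. f y \<in> U}) ` (\<F> \<times> \<U>)"
  show "finite ?\<V>"
    using assms(2,5) by simp
  have "openin Y {y \<in> V. f y \<in> U}" if "V \<in> \<F>" "U \<in> \<U>" for V U
  proof -
    have "openin Y V" using assms(3) that(1) by blast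
    moreover have "openin Y {y \<in> topspace Y. f y \<in> U}"
      using openin_continuous_map_preimage[OF assms(1)] assms(6) that(2) by blast
    moreover have "{y \<in> V. f y \<in> U} = V \<inter> {y \<in> topspace Y. f y \<in> U}"
      using openin_subset[OF \<open>openin Y V\<close>] by blast
    ultimately show ?thesis by (simp add: openin_Int)
  qed
  then show "\<forall>W\<in>?\<V>. openin Y W"
    by auto
  show "topspace Y \<subseteq> \<Union>?\<V>"
  proof
    fix y assume y: "y \<in> topspace Y"
    obtain V where "V \<in> \<F>" "y \<in> V" using assms(4) y by blast
    moreover obtain U where "U \<in> \<U>" "f y \<in> U"
      using assms(7) continuous_map_image_subset_topspace[OF assms(1)] y by blast
    ultimately have "y \<in> {y \<in> V. f y \<in> U}" "(V, U) \<in> \<F> \<times> \<U>" by simp_all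
    then show "y \<in> \<Union>?\<V>" by blast
  qed
  show "(\<exists>V\<in>\<F>. y \<in> V \<and> y' \<in> V) \<and> (\<exists>U\<in>\<U>. f y \<in> U \<and> f y' \<in> U)"
    if common: "\<exists>W\<in>?\<V>. y \<in> W \<and> y' \<in> W" for y y'
  proof -
    obtain V U where "V \<in> \<F>" "U \<in> \<U>" "y \<in> {z \<in> V. f z \<in> U}" "y' \<in> {z \<in> V. f z \<in> U}"
      using common by blast
    then show ?thesis by blast
  qed
qed

lemma left_path_trajectory:
  assumes "p \<in> left_paths Y r s"
    and "\<forall>y\<in>topspace Y. T (\<pi> y) = \<pi>' (r y)" and "\<forall>y\<in>topspace Y. \<pi> y = \<pi>' (s y)"
  shows "\<pi> (p n) = (T ^^ n) (\<pi> (p 0))"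
proof (induction n)
  case (Suc n)
  have "\<pi> (p (Suc n)) = \<pi>' (s (p (Suc n)))"
    using assms(3) left_paths_in_topspace[OF assms(1)] by blast
  also have "\<dots> = \<pi>' (r (p n))"
    using assms(1) by (simp add: left_paths_def)
  also have "\<dots> = T (\<pi> (p n))"
    using assms(2) left_paths_in_topspace[OF assms(1)] by metis
  finally show ?case using Suc by simp
qed simp

lemma left_path_projections_eq:
  assumes expansive: "\<forall>x\<in>topspace X. \<forall>x'\<in>topspace X.
           (\<forall>n. \<exists>U\<in>\<U>. (T ^^ n) x \<in> U \<and> (T ^^ n) x' \<in> U) \<longrightarrow> x = x'"
    and "continuous_map Y X \<pi>"
    and "\<forall>y\<in>topspace Y. T (\<pi> y) = \<pi>' (r y)" and "\<forall>y\<in>topspace Y. \<pi> y = \<pi>' (s y)"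
    and p: "p \<in> left_paths Y r s" and q: "q \<in> left_paths Y r s"
    and close: "\<forall>n. \<exists>U\<in>\<U>. \<pi> (p n) \<in> U \<and> \<pi> (q n) \<in> U"
  shows "\<pi> (p n) = \<pi> (q n)"
proof -
  have orbit: "\<pi> (p' n) = (T ^^ n) (\<pi> (p' 0))" if "p' \<in> left_paths Y r s" for p' n
    using that assms(3,4) by (rule left_path_trajectory)
  have "\<pi> (p 0) = \<pi> (q 0)"
  proof (rule expansive[rule_format])
    show "\<pi> (p 0) \<in> topspace X" "\<pi> (q 0) \<in> topspace X"
      using continuous_map_image_subset_topspace[OF assms(2)] left_paths_in_topspace p q by blast+
    show "\<exists>U\<in>\<U>. (T ^^ n) (\<pi> (p 0)) \<in> U \<and> (T ^^ n) (\<pi> (q 0)) \<in> U" for n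
      unfolding orbit[OF p, symmetric] orbit[OF q, symmetric] using close by blast
  qed
  then show ?thesis
    unfolding orbit[OF p, of n] orbit[OF q, of n] by (rule arg_cong)
qed

text \<open>Only compactness of \<open>Yh\<close>, continuity of \<open>piY\<close>, the two intertwining relations, local
  injectivity and expansiveness of \<open>T\<close> are used.\<close>

theorem proposition4p16:
  fixes X :: "'a topology" and T :: "'a \<Rightarrow> 'a"
    and Yh :: "'y topology" and Xh :: "'x topology"
    and r s :: "'y \<Rightarrow> 'x" and piY :: "'y \<Rightarrow> 'a" and piX :: "'x \<Rightarrow> 'a"
  assumes "compact_space X" and "Hausdorff_space X"
    and "positively_expansive X T"
    and "compact_space Yh" and "Hausdorff_space Yh"
    and "compact_space Xh" and "Hausdorff_space Xh"
    and "continuous_map Yh Xh r" and "continuous_map Yh Xh s"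
    and "continuous_map Yh X piY" and "piY ` topspace Yh = topspace X"
    and "continuous_map Xh X piX" and "piX ` topspace Xh = topspace X"
    and "\<forall>y\<in>topspace Yh. T (piY y) = piX (r y)"
    and "\<forall>y\<in>topspace Yh. piY y = piX (s y)"
    and "locally_injective Yh piY"
  shows "positively_expansive (left_path_space Yh r s) path_shift"
proof -
  obtain \<U> where \<U>: "finite \<U>" "\<forall>U\<in>\<U>. openin X U" "\<Union>\<U> = topspace X"
    and T_expansive: "\<forall>x\<in>topspace X. \<forall>x'\<in>topspace X.
           (\<forall>n. \<exists>U\<in>\<U>. (T ^^ n) x \<in> U \<and> (T ^^ n) x' \<in> U) \<longrightarrow> x = x'"
    using assms(3) unfolding positively_expansive_def by (elim conjE exE) (rule that)
  obtain \<F> where \<F>: "finite \<F>" "\<forall>V\<in>\<F>. openin Yh V \<and> inj_on piY V" "topspace Yh \<subseteq> \<Union>\<F>"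
    using locally_injective_finite_cover[OF assms(4,16)] .
  have \<F>_open: "\<forall>V\<in>\<F>. openin Yh V"
    using \<F>(2) by blast
  obtain \<V> where \<V>: "finite \<V>" "\<forall>W\<in>\<V>. openin Yh W" "topspace Yh \<subseteq> \<Union>\<V>"
    and \<V>_refines: "\<And>y y'. \<exists>W\<in>\<V>. y \<in> W \<and> y' \<in> W \<Longrightarrow>
       (\<exists>V\<in>\<F>. y \<in> V \<and> y' \<in> V) \<and> (\<exists>U\<in>\<U>. piY y \<in> U \<and> piY y' \<in> U)"
    by (rule common_refinement_preimage[OF assms(10) \<F>(1) \<F>_open \<F>(3) \<U>(1,2)
          equalityD2[OF \<U>(3)]])
      (rule that)
  show ?thesis
  proof (rule positively_expansive_path_shiftI[OF \<V>])
    fix p q assume p: "p \<in> left_paths Yh r s" and q: "q \<in> left_paths Yh r s"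
      and close: "\<forall>n. \<exists>W\<in>\<V>. p n \<in> W \<and> q n \<in> W"
    have "\<forall>n. \<exists>U\<in>\<U>. piY (p n) \<in> U \<and> piY (q n) \<in> U"
      by (intro allI conjunct2[OF \<V>_refines[OF close[rule_format]]])
    then have proj_eq: "piY (p n) = piY (q n)" for n
      by (rule left_path_projections_eq[OF T_expansive assms(10,14,15) p q])
    show "p = q"
    proof
      fix n
      obtain V where "V \<in> \<F>" "p n \<in> V" "q n \<in> V"
        using conjunct1[OF \<V>_refines[OF close[rule_format, of n]]] by blast
      then show "p n = q n"
        using \<F>(2) proj_eq[of n] by (meson inj_onD)
    qed
  qed
qed

end
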